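(* Let $P$ be a finite poset, $\epsilon\in\{1,-1\}$ and $\xi\in S^{(\epsilon)}$ with $d=\xi(-\infty)>q^{(\epsilon)}\mathrm{dist}(-\infty,\infty)$. Then every $C\in C_\xi^{[d-\epsilon]}$ contains an element $z$ with $\xi(z)>\epsilon$.
   Context: $P^\pm=P\cup\{-\infty,\infty\}$, $-\infty<z<\infty$ for $z\in P$; $P^-=P\cup\{-\infty\}$. Saturated chain: $x=z_0\lessdot\cdots\lessdot z_t=y$, length $t$; $q^{(\epsilon)}\mathrm{dist}(x,y)=\max\{\epsilon t:$ saturated chain of length $t$ from $x$ to $y$ in $P^\pm\}$. $\xi^+(B)=\sum_{b\in B}\xi(b)$. $S^{(m)}=\{\xi\in\mathbb Z^{P^-}:\xi(x)\ge m\ \forall x\in P,\ \xi(-\infty)\ge\xi^+(C)+m$ for every maximal chain $C$\}; $C_\xi^{[m]}$ = maximal chains $C$ of $P$ with $\xi^+(C)=m$. *)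

theory Defs
  imports Main
begin

text \<open>The poset P is a finite subset of a type with a partial order (every finite
poset is isomorphic to one of these). P^\<pm> = P \<union> {-\<infinity>, \<infinity>}.\<close>

datatype 'a ext = NInf | El 'a | PInf

fun ext_less :: "'a::order ext \<Rightarrow> 'a ext \<Rightarrow> bool" where
  "ext_less NInf NInf = False"
| "ext_less NInf _ = True"
| "ext_less (El x) (El y) = (x < y)"
| "ext_less (El x) PInf = True"
| "ext_less (El x) NInf = False"
| "ext_less PInf _ = False"

definition ext_carrier :: "'a set \<Rightarrow> 'a ext set" where
  "ext_carrier P = {NInf, PInf} \<union> El ` P"

definition covers :: "'a::order set \<Rightarrow> 'a ext \<Rightarrow> 'a ext \<Rightarrow> bool" where
  "covers P x y \<longleftrightarrow> ext_less x y \<and> \<not> (\<exists>z\<in>ext_carrier P. ext_less x z \<and> ext_less z y)"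

text \<open>A saturated chain x = z_0 \<lessdot> ... \<lessdot> z_t = y in P^\<pm>, given as the list
[z_0, ..., z_t]; its length is t.\<close>
definition sat_chain :: "'a::order set \<Rightarrow> 'a ext \<Rightarrow> 'a ext \<Rightarrow> 'a ext list \<Rightarrow> bool" where
  "sat_chain P x y zs \<longleftrightarrow> zs \<noteq> [] \<and> set zs \<subseteq> ext_carrier P \<and> hd zs = x \<and> last zs = y \<and>
     (\<forall>i. Suc i < length zs \<longrightarrow> covers P (zs ! i) (zs ! Suc i))"

definition qdist :: "'a::order set \<Rightarrow> int \<Rightarrow> 'a ext \<Rightarrow> 'a ext \<Rightarrow> int" where
  "qdist P \<epsilon> x y = Max {\<epsilon> * int (length zs - 1) | zs. sat_chain P x y zs}"

definition is_chain :: "'a::order set \<Rightarrow> 'a set \<Rightarrow> bool" where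
  "is_chain P C \<longleftrightarrow> C \<subseteq> P \<and> (\<forall>x\<in>C. \<forall>y\<in>C. x \<le> y \<or> y \<le> x)"

definition maximal_chain :: "'a::order set \<Rightarrow> 'a set \<Rightarrow> bool" where
  "maximal_chain P C \<longleftrightarrow> is_chain P C \<and> (\<forall>D. is_chain P D \<and> C \<subseteq> D \<longrightarrow> D = C)"

text \<open>\<xi> \<in> \<int>^{P^-} is modelled as a function on 'a ext; only its values on P^- matter.\<close>
definition xiplus :: "('a ext \<Rightarrow> int) \<Rightarrow> 'a set \<Rightarrow> int" where
  "xiplus \<xi> B = (\<Sum>b\<in>B. \<xi> (El b))"

definition S_set :: "'a::order set \<Rightarrow> int \<Rightarrow> ('a ext \<Rightarrow> int) set" where
  "S_set P m = {\<xi>. (\<forall>x\<in>P. \<xi> (El x) \<ge> m) \<and>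
      (\<forall>C. maximal_chain P C \<longrightarrow> \<xi> NInf \<ge> xiplus \<xi> C + m)}"

definition C_set :: "'a::order set \<Rightarrow> ('a ext \<Rightarrow> int) \<Rightarrow> int \<Rightarrow> 'a set set" where
  "C_set P \<xi> m = {C. maximal_chain P C \<and> xiplus \<xi> C = m}"

end

theory Submission
  imports Defs
begin

text \<open>If every element of \<open>C\<close> had \<open>\<xi>(z) \<le> \<epsilon>\<close>, then (as \<open>\<xi> \<ge> \<epsilon>\<close> on \<open>P\<close>) \<open>\<xi>\<close> would equal \<open>\<epsilon>\<close>
  on all of \<open>C\<close>, so \<open>d - \<epsilon> = \<xi>\<^sup>+(C) = \<epsilon> |C|\<close>, i.e. \<open>d = \<epsilon> (|C| + 1)\<close>. But a maximal chain \<open>C\<close>,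
  framed by \<open>-\<infinity>\<close> and \<open>\<infinity>\<close>, is a saturated chain of length \<open>|C| + 1\<close> in \<open>P\<^sup>\<plusminus>\<close>, hence
  \<open>d \<le> qdist P \<epsilon> NInf PInf\<close>, contradicting the hypothesis on \<open>d\<close>.\<close>

lemma finite_chain_sorted_list:
  fixes C :: "'a::order set"
  assumes "finite C" and "\<forall>x\<in>C. \<forall>y\<in>C. x \<le> y \<or> y \<le> x"
  shows "\<exists>xs. set xs = C \<and> sorted_wrt (<) xs"
  using assms
proof (induction "card C" arbitrary: C rule: less_induct)
  case less
  show ?case
  proof (cases "C = {}")
    case True
    then show ?thesis by auto
  next
    case False
    obtain m where m: "m \<in> C" "\<forall>b\<in>C. b \<le> m \<longrightarrow> m = b"
      using finite_has_minimal[OF less.prems(1) False] by blast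
    have "card (C - {m}) < card C"
      using card_Diff1_less[OF less.prems(1) m(1)] .
    then obtain xs where xs: "set xs = C - {m}" "sorted_wrt (<) xs"
      using less.hyps[of "C - {m}"] less.prems by auto
    have "\<forall>y\<in>C - {m}. m < y"
      using m less.prems(2) by (metis DiffE insertI1 order.order_iff_strict)
    then show ?thesis
      using xs m by (intro exI[of _ "m # xs"]) auto
  qed
qed

lemma sorted_wrt_between_comparable:
  assumes "transp R" and "sorted_wrt R L" and "Suc i < length L"
    and "R (L ! i) z" and "R z (L ! Suc i)" and "y \<in> set L"
  shows "R y z \<or> R z y"
proof -
  obtain j where j: "j < length L" "y = L ! j"
    using assms(6) by (auto simp: in_set_conv_nth)
  have ordL: "R (L ! k) (L ! l)" if "k < l" "l < length L" for k l
    using assms(2) that by (simp add: sorted_wrt_iff_nth_less)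
  show ?thesis
  proof (cases "j \<le> i")
    case True
    then have "L ! j = L ! i \<or> R (L ! j) (L ! i)"
      using ordL assms(3) by (metis le_neq_implies_less Suc_lessD)
    then show ?thesis
      using assms(1,4) j(2) by (metis transpD)
  next
    case False
    then have "L ! j = L ! Suc i \<or> R (L ! Suc i) (L ! j)"
      using ordL j(1) by (metis le_neq_implies_less not_less_eq_eq)
    then show ?thesis
      using assms(1,5) j(2) by (metis transpD)
  qed
qed

lemma ext_less_trans: "ext_less a b \<Longrightarrow> ext_less b c \<Longrightarrow> ext_less a c"
  by (cases a; cases b; cases c) auto

lemma ext_less_irrefl: "\<not> ext_less a a"
  by (cases a) auto

lemma transp_ext_less: "transp ext_less"
  by (meson ext_less_trans transpI)

lemma sat_chain_sorted: "sat_chain P x y zs \<Longrightarrow> sorted_wrt ext_less zs"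
  unfolding sat_chain_def covers_def
  by (simp add: sorted_wrt_iff_nth_Suc_transp[OF transp_ext_less])

lemma sat_chain_distinct: "sat_chain P x y zs \<Longrightarrow> distinct zs"
proof -
  have "sorted_wrt ext_less xs \<Longrightarrow> distinct xs" for xs :: "'a ext list"
    by (induction xs) (auto simp: ext_less_irrefl)
  then show "sat_chain P x y zs \<Longrightarrow> distinct zs"
    using sat_chain_sorted by blast
qed

lemma qdist_ge_sat_chain:
  assumes "finite P" and "sat_chain P x y zs"
  shows "\<epsilon> * int (length zs - 1) \<le> qdist P \<epsilon> x y"
proof -
  define V where "V = {\<epsilon> * int (length zs - 1) | zs. sat_chain P x y zs}"
  have "V \<subseteq> (\<lambda>zs. \<epsilon> * int (length zs - 1)) ` {zs. set zs \<subseteq> ext_carrier P \<and> distinct zs}"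
  proof
    fix v
    assume "v \<in> V"
    then obtain ws where ws: "v = \<epsilon> * int (length ws - 1)" "sat_chain P x y ws"
      unfolding V_def by blast
    then have "set ws \<subseteq> ext_carrier P" "distinct ws"
      using sat_chain_distinct unfolding sat_chain_def by blast+
    with ws(1) show "v \<in> (\<lambda>zs. \<epsilon> * int (length zs - 1)) ` {zs. set zs \<subseteq> ext_carrier P \<and> distinct zs}"
      by blast
  qed
  moreover have "finite (ext_carrier P)"
    using assms(1) by (simp add: ext_carrier_def)
  ultimately have "finite V"
    by (rule finite_subset[OF _ finite_imageI[OF finite_subset_distinct]])
  moreover have "\<epsilon> * int (length zs - 1) \<in> V"
    unfolding V_def using assms(2) by blast
  ultimately have "\<epsilon> * int (length zs - 1) \<le> Max V"
    by (rule Max_ge)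
  then show ?thesis
    unfolding qdist_def V_def .
qed

lemma maximal_chain_insert:
  assumes "maximal_chain P C" and "w \<in> P" and "\<forall>c\<in>C. c < w \<or> w < c"
  shows "w \<in> C"
proof -
  have "is_chain P (insert w C)"
    using assms unfolding maximal_chain_def is_chain_def by (auto intro: less_imp_le)
  then show ?thesis
    using assms(1) unfolding maximal_chain_def by blast
qed

lemma maximal_chain_sat_chain:
  assumes "maximal_chain P C" and "set xs = C" and "sorted_wrt (<) xs"
  shows "sat_chain P NInf PInf (NInf # map El xs @ [PInf])"
proof -
  define L where "L = NInf # map El xs @ [PInf]"
  have CP: "C \<subseteq> P"
    using assms(1) by (simp add: maximal_chain_def is_chain_def)
  have sorted: "sorted_wrt ext_less L"
    unfolding L_def using assms(3)
    by (auto simp: sorted_wrt_append sorted_wrt_map elim: sorted_wrt_mono_rel[rotated])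
  have covers: "covers P (L ! i) (L ! Suc i)" if i: "Suc i < length L" for i
    unfolding covers_def
  proof (intro conjI notI)
    show "ext_less (L ! i) (L ! Suc i)"
      using sorted i by (simp add: sorted_wrt_iff_nth_less)
    assume "\<exists>z\<in>ext_carrier P. ext_less (L ! i) z \<and> ext_less z (L ! Suc i)"
    then obtain z where z: "z \<in> ext_carrier P" "ext_less (L ! i) z" "ext_less z (L ! Suc i)"
      by blast
    have "z \<noteq> NInf" "z \<noteq> PInf"
      using z(2,3) by (cases "L ! i"; auto)+
    then obtain w where w: "z = El w" "w \<in> P"
      using z(1) by (cases z) (auto simp: ext_carrier_def)
    have comparable: "ext_less y z \<or> ext_less z y" if "y \<in> set L" for y
      using sorted_wrt_between_comparable[OF transp_ext_less sorted i z(2,3) that] .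
    have "\<forall>c\<in>C. c < w \<or> w < c"
    proof
      fix c
      assume "c \<in> C"
      then have "El c \<in> set L"
        using assms(2) by (simp add: L_def)
      from comparable[OF this] show "c < w \<or> w < c"
        using w(1) by simp
    qed
    then have "El w \<in> set L"
      using maximal_chain_insert[OF assms(1) w(2)] assms(2) by (simp add: L_def)
    from comparable[OF this] show False
      using w(1) by (simp add: ext_less_irrefl)
  qed
  have "set L \<subseteq> ext_carrier P"
    unfolding L_def ext_carrier_def using assms(2) CP by auto
  with covers show ?thesis
    unfolding sat_chain_def L_def[symmetric] by (simp add: L_def)
qed

lemma qdist_ge_maximal_chain:
  assumes "finite P" and "maximal_chain P C"
  shows "\<epsilon> * (int (card C) + 1) \<le> qdist P \<epsilon> NInf PInf"
proof -
  have "finite C" and "\<forall>x\<in>C. \<forall>y\<in>C. x \<le> y \<or> y \<le> x"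
    using assms finite_subset by (auto simp: maximal_chain_def is_chain_def)
  then obtain xs where xs: "set xs = C" "sorted_wrt (<) xs"
    using finite_chain_sorted_list by blast
  have "distinct xs"
    using xs(2) by (induction xs) auto
  then have "length (NInf # map El xs @ [PInf]) - 1 = card C + 1"
    using xs(1) distinct_card by fastforce
  then show ?thesis
    using qdist_ge_sat_chain[OF assms(1) maximal_chain_sat_chain[OF assms(2) xs], of \<epsilon>]
    by (simp add: add.commute)
qed

theorem mainTheorem14:
  fixes P :: "'a::order set" and \<epsilon> :: int and \<xi> :: "'a ext \<Rightarrow> int" and d :: int
  assumes "finite P"
    and "\<epsilon> \<in> {1, -1}"
    and "\<xi> \<in> S_set P \<epsilon>"
    and "d = \<xi> NInf"
    and "d > qdist P \<epsilon> NInf PInf"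
    and "C \<in> C_set P \<xi> (d - \<epsilon>)"
  shows "\<exists>z\<in>C. \<xi> (El z) > \<epsilon>"
proof (rule ccontr)
  assume "\<not> (\<exists>z\<in>C. \<xi> (El z) > \<epsilon>)"
  have mc: "maximal_chain P C" and sum: "xiplus \<xi> C = d - \<epsilon>"
    using assms(6) by (auto simp: C_set_def)
  then have "\<forall>z\<in>C. \<xi> (El z) = \<epsilon>"
    using \<open>\<not> (\<exists>z\<in>C. \<xi> (El z) > \<epsilon>)\<close> assms(3)
    by (force simp: S_set_def maximal_chain_def is_chain_def)
  then have "xiplus \<xi> C = \<epsilon> * int (card C)"
    by (simp add: xiplus_def)
  then have "d = \<epsilon> * (int (card C) + 1)"
    using sum by (simp add: algebra_simps)
  then show False
    using qdist_ge_maximal_chain[OF assms(1) mc, of \<epsilon>] assms(5) by simp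
qed

end
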